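(* Let $n\ge 1$. An element $A=(A_1,\dots,A_n)\in V_n$ is similar to an upper triangular $n$-matrix if and only if for all triples $1\le j,k,l\le n$, the triple $(A_j,A_k,A_l)\in V_3$ is similar to an upper triangular $3$-matrix.
   Context: $V_n=(M_{2\times2}(\mathbb{C}))^{\times n}$ with $GL(2,\mathbb{C})$ acting by simultaneous conjugation $g\cdot A=(gA_1g^{-1},\dots,gA_ng^{-1})$; two elements are similar if they lie in the same orbit. An $n$-matrix $A$ is upper triangular if every component $A_j$ is an upper triangular matrix. *)

theory Defs
  imports "HOL-Analysis.Analysis"
begin

text \<open>2x2 complex matrices: complex^2^2, entry M $ i $ j is row i, column j.
  An n-matrix (element of V_n) is a map nat => complex^2^2, only indices 0..<n matter.\<close>

definition upper_triangular2 :: "complex^2^2 \<Rightarrow> bool" where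
  "upper_triangular2 M \<longleftrightarrow> M $ 2 $ 1 = 0"

definition similar_tuple :: "nat \<Rightarrow> (nat \<Rightarrow> complex^2^2) \<Rightarrow> (nat \<Rightarrow> complex^2^2) \<Rightarrow> bool" where
  "similar_tuple n A B \<longleftrightarrow>
     (\<exists>g::complex^2^2. invertible g \<and> (\<forall>j<n. B j = g ** A j ** matrix_inv g))"

definition upper_triangular_tuple :: "nat \<Rightarrow> (nat \<Rightarrow> complex^2^2) \<Rightarrow> bool" where
  "upper_triangular_tuple n A \<longleftrightarrow> (\<forall>j<n. upper_triangular2 (A j))"

definition similar_to_upper_triangular :: "nat \<Rightarrow> (nat \<Rightarrow> complex^2^2) \<Rightarrow> bool" where
  "similar_to_upper_triangular n A \<longleftrightarrow>
     (\<exists>B. similar_tuple n A B \<and> upper_triangular_tuple n B)"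

end

(* A tuple of 2x2 matrices is simultaneously triangularizable iff its members share an
   eigenvector: a conjugation moving that vector to the first basis vector does the job.
   What remains is a Helly-type statement about eigenvectors. If every member is scalar,
   any vector works. Otherwise a non-scalar member F j has at most two eigenlines. Take an
   eigenvector u of F j; if it is not common, some F k misses it, and a common eigenvector
   w of F j and F k spans the other eigenline of F j. For every l, a common eigenvector of
   F j, F k, F l lies on an eigenline of F j but not on the line of u, which F k misses;
   so it lies on the line of w, and w is an eigenvector of F l. *)

theory Submission
  imports Defs
begin

definition eigenvector :: "'a::field^'n^'n \<Rightarrow> 'a^'n \<Rightarrow> bool" where
  "eigenvector M v \<longleftrightarrow> v \<noteq> 0 \<and> (\<exists>c. M *v v = c *s v)"

lemma eigenvector_nonzero: "eigenvector M v \<Longrightarrow> v \<noteq> 0"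
  unfolding eigenvector_def by blast

lemma eigenvector_parallel_iff:
  assumes "v = c *s w" "v \<noteq> 0"
  shows "eigenvector M v \<longleftrightarrow> eigenvector M w"
proof -
  have "c \<noteq> 0" "w \<noteq> 0" using assms by auto
  have "M *v v = d *s v \<longleftrightarrow> M *v w = d *s w" for d
  proof -
    have "M *v v = d *s v \<longleftrightarrow> c *s (M *v w) = c *s (d *s w)"
      by (simp add: assms(1) vec.scale mult.commute)
    also have "\<dots> \<longleftrightarrow> M *v w = d *s w"
      using \<open>c \<noteq> 0\<close> by (simp only: vec.scale_cancel_left) simp
    finally show ?thesis .
  qed
  then show ?thesis
    unfolding eigenvector_def using assms(2) \<open>w \<noteq> 0\<close> by auto
qed

definition cross2 :: "'a::comm_ring^2 \<Rightarrow> 'a^2 \<Rightarrow> 'a" where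
  "cross2 u w = u$1 * w$2 - u$2 * w$1"

lemma cross2_cramer:
  fixes u w y :: "'a::comm_ring^2"
  shows "cross2 u w *s y = cross2 y w *s u + cross2 u y *s w"
  by (simp add: vec_eq_iff forall_2 cross2_def algebra_simps)

lemma cross2_combination_left: "cross2 (a *s u + b *s w) w = a * cross2 u w"
  by (simp add: cross2_def algebra_simps)

lemma cross2_combination_right: "cross2 u (a *s u + b *s w) = b * cross2 u w"
  by (simp add: cross2_def algebra_simps)

lemma cross2_eq_0_imp_parallel:
  fixes u w :: "'a::field^2"
  assumes "w \<noteq> 0" "cross2 u w = 0"
  shows "\<exists>c. u = c *s w"
proof (cases "w$1 = 0")
  case True
  then have "w$2 \<noteq> 0" using assms(1) by (auto simp: vec_eq_iff forall_2)
  then have "u$1 = 0" using assms(2) True by (simp add: cross2_def)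
  then have "u = (u$2 / w$2) *s w"
    using True \<open>w$2 \<noteq> 0\<close> by (simp add: vec_eq_iff forall_2)
  then show ?thesis by blast
next
  case False
  then have "u$2 = u$1 / w$1 * w$2"
    using assms(2) by (simp add: cross2_def field_simps)
  then have "u = (u$1 / w$1) *s w"
    using False by (simp add: vec_eq_iff forall_2)
  then show ?thesis by blast
qed

lemma cross2_nonzero_spans:
  fixes u w y :: "'a::field^2"
  assumes "cross2 u w \<noteq> 0"
  obtains a b where "y = a *s u + b *s w"
proof
  have "y = (1 / cross2 u w) *s (cross2 u w *s y)"
    using assms by simp
  also have "\<dots> = (cross2 y w / cross2 u w) *s u + (cross2 u y / cross2 u w) *s w"
    by (subst cross2_cramer[of u w y]) (simp add: vec.scale_right_distrib)
  finally show "y = (cross2 y w / cross2 u w) *s u + (cross2 u y / cross2 u w) *s w" .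
qed

lemma cross2_nonzero_independent:
  fixes u w :: "'a::field^2"
  assumes "cross2 u w \<noteq> 0" "a *s u + b *s w = 0"
  shows "a = 0" "b = 0"
proof -
  have "cross2 0 w = 0" "cross2 u 0 = 0" by (simp_all add: cross2_def)
  then show "a = 0" "b = 0"
    using cross2_combination_left[of a u b w] cross2_combination_right[of u a b w] assms
    by (metis mult_eq_0_iff)+
qed

lemma non_scalar_eigenvector_parallel_cases:
  fixes M :: "'a::field^2^2"
  assumes non_scalar: "\<exists>x. x \<noteq> 0 \<and> \<not> eigenvector M x"
    and u: "eigenvector M u" and w: "eigenvector M w" and not_parallel: "\<not> (\<exists>c. u = c *s w)"
    and z: "eigenvector M z"
  shows "(\<exists>c. z = c *s u) \<or> (\<exists>c. z = c *s w)"
proof -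
  have "cross2 u w \<noteq> 0"
    using cross2_eq_0_imp_parallel eigenvector_nonzero[OF w] not_parallel by blast
  note span = cross2_nonzero_spans[OF this] and indep = cross2_nonzero_independent[OF this]
  obtain a where a: "M *v u = a *s u" using u unfolding eigenvector_def by blast
  obtain b where b: "M *v w = b *s w" using w unfolding eigenvector_def by blast
  obtain c where c: "M *v z = c *s z" using z unfolding eigenvector_def by blast
  have image: "M *v (p *s u + q *s w) = (p * a) *s u + (q * b) *s w" for p q
    by (simp add: vec.add vec.scale a b)
  have "a \<noteq> b"
  proof
    assume "a = b"
    obtain x where "x \<noteq> 0" "\<not> eigenvector M x" using non_scalar by blast
    moreover obtain p q where pq: "x = p *s u + q *s w" using span by blast
    then have "M *v x = a *s x"
      unfolding pq image \<open>a = b\<close> by (simp add: vec.scale_right_distrib mult.commute)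
    ultimately show False unfolding eigenvector_def by blast
  qed
  obtain p q where pq: "z = p *s u + q *s w" using span by blast
  have "(p * (a - c)) *s u + (q * (b - c)) *s w = 0"
    using c image[of p q] unfolding pq by (simp add: vec_eq_iff algebra_simps)
  then have "p * (a - c) = 0" "q * (b - c) = 0" by (rule indep)+
  with \<open>a \<noteq> b\<close> have "p = 0 \<or> q = 0" by auto
  then show ?thesis using pq by auto
qed

lemma common_eigenvector_of_triples:
  fixes F :: "'i \<Rightarrow> 'a::field^2^2"
  assumes triples: "\<And>j k l. j \<in> I \<Longrightarrow> k \<in> I \<Longrightarrow> l \<in> I \<Longrightarrow>
      \<exists>v. eigenvector (F j) v \<and> eigenvector (F k) v \<and> eigenvector (F l) v"
  shows "\<exists>v. v \<noteq> 0 \<and> (\<forall>j\<in>I. eigenvector (F j) v)"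
proof (cases "\<exists>j\<in>I. \<exists>x. x \<noteq> 0 \<and> \<not> eigenvector (F j) x")
  case False
  have "vector [1, 0] \<noteq> (0::'a^2)" by (simp add: vec_eq_iff forall_2)
  with False show ?thesis by blast
next
  case True
  then obtain j where j: "j \<in> I" and non_scalar: "\<exists>x. x \<noteq> 0 \<and> \<not> eigenvector (F j) x"
    by blast
  obtain u where u: "eigenvector (F j) u" using triples[OF j j j] by blast
  show ?thesis
  proof (cases "\<forall>k\<in>I. eigenvector (F k) u")
    case True
    then show ?thesis using eigenvector_nonzero[OF u] by blast
  next
    case False
    then obtain k where k: "k \<in> I" and u_k: "\<not> eigenvector (F k) u" by blast
    obtain w where w: "eigenvector (F j) w" "eigenvector (F k) w" using triples[OF j k k] by blast
    have not_parallel: "\<not> (\<exists>c. u = c *s w)"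
      using eigenvector_parallel_iff eigenvector_nonzero[OF u] w(2) u_k by blast
    have "eigenvector (F l) w" if l: "l \<in> I" for l
    proof -
      obtain z where z: "eigenvector (F j) z" "eigenvector (F k) z" "eigenvector (F l) z"
        using triples[OF j k l] by blast
      have "\<not> (\<exists>c. z = c *s u)"
        using eigenvector_parallel_iff eigenvector_nonzero[OF z(2)] z(2) u_k by blast
      then obtain c where "z = c *s w"
        using non_scalar_eigenvector_parallel_cases[OF non_scalar u w(1) not_parallel z(1)] by blast
      then show ?thesis using eigenvector_parallel_iff eigenvector_nonzero[OF z(3)] z(3) by blast
    qed
    then show ?thesis using eigenvector_nonzero[OF w(1)] by blast
  qed
qed

lemma matrix_inv_right: "invertible g \<Longrightarrow> g ** matrix_inv g = mat 1"
  and matrix_inv_left: "invertible g \<Longrightarrow> matrix_inv g ** g = mat 1"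
  unfolding invertible_def matrix_inv_def by (metis (mono_tags, lifting) someI_ex)+

lemma eigenvector_similar_iff:
  fixes g M :: "'a::field^'n^'n"
  assumes "invertible g"
  shows "eigenvector (g ** M ** matrix_inv g) (g *v v) \<longleftrightarrow> eigenvector M v"
proof -
  have inj: "inj ((*v) g)" using assms by (rule inj_matrix_vector_mult)
  have "(g ** M ** matrix_inv g) *v (g *v v) = g *v (M *v v)"
    by (metis matrix_vector_mul_assoc matrix_mul_assoc matrix_mul_rid matrix_inv_left[OF assms])
  then have "(g ** M ** matrix_inv g) *v (g *v v) = c *s (g *v v) \<longleftrightarrow> M *v v = c *s v" for c
    using inj by (simp add: vec.scale[symmetric] inj_eq)
  moreover have "g *v v \<noteq> 0 \<longleftrightarrow> v \<noteq> 0"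
    using inj by (metis injD matrix_vector_mult_0_right)
  ultimately show ?thesis unfolding eigenvector_def by simp
qed

lemma upper_triangular2_iff_eigenvector: "upper_triangular2 M \<longleftrightarrow> eigenvector M (vector [1, 0])"
  by (auto simp: upper_triangular2_def eigenvector_def vec_eq_iff forall_2 matrix_vector_mult_def sum_2)

lemma invertible_maps_to_first_axis:
  fixes v :: "'a::field^2"
  assumes "v \<noteq> 0"
  obtains g :: "'a^2^2" where "invertible g" "g *v v = vector [1, 0]"
proof (cases "v$1 = 0")
  case True
  then have "v$2 \<noteq> 0" using assms by (auto simp: vec_eq_iff forall_2)
  let ?g = "vector [vector [0, 1 / v$2], vector [1, 0]] :: 'a^2^2"
  have "invertible ?g" "?g *v v = vector [1, 0]"
    using \<open>v$2 \<noteq> 0\<close> True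
    by (simp_all add: invertible_det_nz det_2 vec_eq_iff forall_2 matrix_vector_mult_def sum_2)
  with that show ?thesis by blast
next
  case False
  let ?g = "vector [vector [1 / v$1, 0], vector [- v$2 / v$1, 1]] :: 'a^2^2"
  have "invertible ?g" "?g *v v = vector [1, 0]"
    using False by (simp_all add: invertible_det_nz det_2 vec_eq_iff forall_2 matrix_vector_mult_def sum_2)
  with that show ?thesis by blast
qed

lemma similar_to_upper_triangular_iff_common_eigenvector:
  "similar_to_upper_triangular n A \<longleftrightarrow> (\<exists>v. v \<noteq> 0 \<and> (\<forall>j<n. eigenvector (A j) v))"
proof
  assume "similar_to_upper_triangular n A"
  then obtain g where g: "invertible g"
    and upper: "\<forall>j<n. upper_triangular2 (g ** A j ** matrix_inv g)"
    unfolding similar_to_upper_triangular_def similar_tuple_def upper_triangular_tuple_def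
    by auto
  define v where "v = matrix_inv g *v vector [1, 0]"
  have gv: "g *v v = vector [1, 0]"
    by (simp add: v_def matrix_vector_mul_assoc matrix_inv_right[OF g])
  have "eigenvector (A j) v" if "j < n" for j
    using upper that eigenvector_similar_iff[OF g, of "A j" v]
    unfolding gv upper_triangular2_iff_eigenvector by simp
  moreover have "v \<noteq> 0"
    using gv matrix_vector_mult_0_right[of g] by (force simp: vec_eq_iff forall_2)
  ultimately show "\<exists>v. v \<noteq> 0 \<and> (\<forall>j<n. eigenvector (A j) v)"
    by blast
next
  assume "\<exists>v. v \<noteq> 0 \<and> (\<forall>j<n. eigenvector (A j) v)"
  then obtain v where "v \<noteq> 0" and common: "\<forall>j<n. eigenvector (A j) v" by blast
  obtain g :: "complex^2^2" where g: "invertible g" and gv: "g *v v = vector [1, 0]"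
    using \<open>v \<noteq> 0\<close> by (rule invertible_maps_to_first_axis)
  define B where "B j = g ** A j ** matrix_inv g" for j
  have "upper_triangular2 (B j)" if "j < n" for j
    using eigenvector_similar_iff[OF g, of "A j" v] common that
    unfolding B_def gv upper_triangular2_iff_eigenvector by simp
  then have "upper_triangular_tuple n B"
    unfolding upper_triangular_tuple_def by blast
  moreover have "similar_tuple n A B"
    unfolding similar_tuple_def B_def using g by auto
  ultimately show "similar_to_upper_triangular n A"
    unfolding similar_to_upper_triangular_def by blast
qed

lemma similar_to_upper_triangular_triple_iff:
  "similar_to_upper_triangular 3 (\<lambda>i. [X, Y, Z] ! i) \<longleftrightarrow>
     (\<exists>v. eigenvector X v \<and> eigenvector Y v \<and> eigenvector Z v)"
proof -
  have "(\<forall>i<3. eigenvector ([X, Y, Z] ! i) v) \<longleftrightarrow>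
      eigenvector X v \<and> eigenvector Y v \<and> eigenvector Z v" for v
    by (auto simp: numeral_3_eq_3 less_Suc_eq)
  then show ?thesis
    unfolding similar_to_upper_triangular_iff_common_eigenvector
    using eigenvector_nonzero by blast
qed

theorem theorem2p7:
  fixes n :: nat and A :: "nat \<Rightarrow> complex^2^2"
  assumes "n \<ge> 1"
  shows "similar_to_upper_triangular n A \<longleftrightarrow>
    (\<forall>j<n. \<forall>k<n. \<forall>l<n.
       similar_to_upper_triangular 3 (\<lambda>i. [A j, A k, A l] ! i))"
  unfolding similar_to_upper_triangular_triple_iff
  unfolding similar_to_upper_triangular_iff_common_eigenvector
proof
  assume "\<exists>v. v \<noteq> 0 \<and> (\<forall>j<n. eigenvector (A j) v)"
  then show "\<forall>j<n. \<forall>k<n. \<forall>l<n.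
      \<exists>v. eigenvector (A j) v \<and> eigenvector (A k) v \<and> eigenvector (A l) v"
    by blast
next
  assume "\<forall>j<n. \<forall>k<n. \<forall>l<n.
      \<exists>v. eigenvector (A j) v \<and> eigenvector (A k) v \<and> eigenvector (A l) v"
  then show "\<exists>v. v \<noteq> 0 \<and> (\<forall>j<n. eigenvector (A j) v)"
    using common_eigenvector_of_triples[of "{..<n}" A] by auto
qed

end
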